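(* Let $n \ge m$ be natural numbers and let $g(x)=a_m x^m + \dots + a_1 x + a_0$ be a polynomial with integer coefficients. Then \[ \sum_{k=0}^{n} g(k)\binom{n}{k}\, d(n-k) = \left(\sum_{i=0}^{m} a_i B_i\right) n!. \]
   Context: For a nonnegative integer $r$, $d(r)$ denotes the number of derangements of $\{1,\dots,r\}$ (permutations with no fixed point), with $d(0)=1$. $B_i$ denotes the $i$-th Bell number, the number of partitions of an $i$-element set into nonempty blocks, with $B_0=1$. *)

theory Defs
  imports "HOL-Combinatorics.Permutations" "HOL-Library.Disjoint_Sets"
begin

definition derangements_count :: "nat \<Rightarrow> nat" where
  "derangements_count r = card {p. p permutes {1..r} \<and> (\<forall>x\<in>{1..r}. p x \<noteq> x)}"

definition Bell :: "nat \<Rightarrow> nat" where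
  "Bell i = card {P. partition_on {1..i} P}"

end

(* Summed over all permutations s of n points, classified by their set of fixed points,
   fix(s)^i adds up to M_i(n) = sum_k k^i C(n,k) d(n-k).  Since k C(n+1,k) = (n+1) C(n,k-1),
   the binomial expansion of k^i gives M_(i+1)(n+1) = (n+1) sum_j C(i,j) M_j(n), the same
   recurrence as B_(i+1) = sum_j C(i,j) B_j (remove the block containing a new point).  With
   M_0(n) = n! this yields M_i(n) = B_i n! for i <= n, and the theorem follows by linearity. *)

theory Submission
  imports Defs
begin

definition derangements :: "'a set \<Rightarrow> ('a \<Rightarrow> 'a) set" where
  "derangements S = {p. p permutes S \<and> (\<forall>x\<in>S. p x \<noteq> x)}"

lemma sum_Pow_card:
  assumes "finite A"
  shows "(\<Sum>F\<in>Pow A. f (card F)) = (\<Sum>k\<le>card A. of_nat (card A choose k) * f k)"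
proof -
  have "(\<Sum>F\<in>Pow A. f (card F))
      = (\<Sum>k\<le>card A. \<Sum>F\<in>{F. F \<in> Pow A \<and> card F = k}. f (card F))"
    by (rule sum.group[symmetric]) (auto simp: assms card_mono)
  also have "\<dots> = (\<Sum>k\<le>card A. of_nat (card {F. F \<subseteq> A \<and> card F = k}) * f k)"
    by (intro sum.cong) auto
  finally show ?thesis
    by (simp add: n_subsets[OF assms])
qed

lemma card_derangements:
  assumes "finite S"
  shows "card (derangements S) = derangements_count (card S)"
proof -
  obtain h where "bij_betw h S {1..card S}"
    using finite_same_card_bij[OF assms, of "{1..card S}"] by auto
  then show ?thesis
    unfolding derangements_def derangements_count_def
    by (rule bij_betw_same_card[OF bij_betw_derangements])
qed

lemma permutes_with_fixpoints_eq_derangements: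
  assumes "F \<subseteq> A"
  shows "{p. p permutes A \<and> {x\<in>A. p x = x} = F} = derangements (A - F)"
proof safe
  fix p assume "p permutes A"
  then show "p \<in> derangements (A - {x\<in>A. p x = x})"
    by (auto simp: derangements_def permutes_def)
next
  fix p assume "p \<in> derangements (A - F)"
  then have p: "p permutes (A - F)" "\<forall>x\<in>A - F. p x \<noteq> x"
    by (auto simp: derangements_def)
  show "p permutes A"
    using p(1) by (rule permutes_subset) auto
  show "\<And>x. x \<in> A \<Longrightarrow> p x = x \<Longrightarrow> x \<in> F"
    using p(2) by auto
  show "\<And>x. x \<in> F \<Longrightarrow> x \<in> A"
    using assms by auto
  show "\<And>x. x \<in> F \<Longrightarrow> p x = x"
    using p(1) by (auto simp: permutes_def)
qed

lemma sum_binomial_derangements_count: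
  "(\<Sum>k\<le>n. (n choose k) * derangements_count (n - k)) = fact n"
proof -
  let ?A = "{1..n}"
  have "fact n = card {p. p permutes ?A}"
    by (simp add: card_permutations)
  also have "\<dots> = (\<Sum>F\<in>Pow ?A. card {p. p permutes ?A \<and> {x\<in>?A. p x = x} = F})"
  proof -
    have "(\<lambda>p. {x\<in>?A. p x = x}) ` {p. p permutes ?A} \<subseteq> Pow ?A"
      by blast
    from sum.group[OF finite_permutations[OF finite_atLeastAtMost] _ this, of "\<lambda>_. 1::nat"]
    show ?thesis
      by simp
  qed
  also have "\<dots> = (\<Sum>F\<in>Pow ?A. derangements_count (n - card F))"
  proof (intro sum.cong refl)
    fix F assume "F \<in> Pow ?A"
    then have "F \<subseteq> ?A" "finite F"
      by (auto intro: finite_subset)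
    then show "card {p. p permutes ?A \<and> {x\<in>?A. p x = x} = F} = derangements_count (n - card F)"
      by (subst permutes_with_fixpoints_eq_derangements)
        (simp_all add: card_derangements card_Diff_subset)
  qed
  also have "\<dots> = (\<Sum>k\<le>n. (n choose k) * derangements_count (n - k))"
    using sum_Pow_card[of ?A "\<lambda>k. derangements_count (n - k)"] by simp
  finally show ?thesis ..
qed

lemma card_partitions_le_card_partitions_image:
  assumes "inj_on f A" "finite A"
  shows "card {P. partition_on A P} \<le> card {P. partition_on (f ` A) P}"
proof (rule card_inj_on_le)
  have "inj_on ((`) ((`) f)) (Pow (Pow A))"
    by (intro inj_on_image_Pow assms)
  then show "inj_on ((`) ((`) f)) {P. partition_on A P}"
    by (rule inj_on_subset) (auto simp: partition_on_def)
  show "(`) ((`) f) ` {P. partition_on A P} \<subseteq> {P. partition_on (f ` A) P}"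
  proof safe
    fix P assume P: "partition_on A P"
    then have "{} \<notin> (`) f ` P"
      by (auto simp: partition_on_def)
    then show "partition_on (f ` A) ((`) f ` P)"
      using partition_on_inj_image[OF P assms(1)] by simp
  qed
  show "finite {P. partition_on (f ` A) P}"
    using assms(2) by (intro finitely_many_partition_on) simp
qed

lemma card_partitions_eq_Bell:
  assumes "finite A"
  shows "card {P. partition_on A P} = Bell (card A)"
proof -
  obtain h where h: "bij_betw h A {1..card A}"
    using finite_same_card_bij[OF assms, of "{1..card A}"] by auto
  have "card {P. partition_on A P} \<le> card {P. partition_on {1..card A} P}"
    using card_partitions_le_card_partitions_image[OF _ assms, of h] h
    by (simp add: bij_betw_def)
  moreover have "card {P. partition_on {1..card A} P} \<le> card {P. partition_on A P}"
    using card_partitions_le_card_partitions_image[of "inv_into A h" "{1..card A}"]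
      bij_betw_inv_into[OF h] by (simp add: bij_betw_def)
  ultimately show ?thesis
    by (simp add: Bell_def)
qed

lemma bij_betw_partitions_insert:
  assumes "x \<notin> A"
  shows "bij_betw (\<lambda>(C, P). insert (insert x C) P)
           (SIGMA C:Pow A. {P. partition_on (A - C) P}) {Q. partition_on (insert x A) Q}"
proof (rule bij_betw_imageI)
  have x_notin_blocks: "x \<notin> \<Union>P" if "partition_on (A - C) P" for C P
    using partition_onD1[OF that] assms by blast
  show "inj_on (\<lambda>(C, P). insert (insert x C) P) (SIGMA C:Pow A. {P. partition_on (A - C) P})"
  proof (rule inj_onI, clarsimp)
    fix C C' P P'
    assume C: "C \<subseteq> A" "C' \<subseteq> A" and P: "partition_on (A - C) P" "partition_on (A - C') P'"
      and eq: "insert (insert x C) P = insert (insert x C') P'"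
    have notin: "insert x C \<notin> P" "insert x C \<notin> P'"
      using x_notin_blocks[OF P(1)] x_notin_blocks[OF P(2)] by auto
    have "insert x C \<in> insert (insert x C') P'"
      using eq by (metis insertI1)
    with notin(2) have blocks_eq: "insert x C = insert x C'"
      by (metis insertE)
    then have "C = C'"
      using C assms by (metis Diff_insert_absorb subsetD)
    moreover have "P = P'"
      using eq notin unfolding blocks_eq by (metis insert_ident)
    ultimately show "C = C' \<and> P = P'" ..
  qed
next
  show "(\<lambda>(C, P). insert (insert x C) P) ` (SIGMA C:Pow A. {P. partition_on (A - C) P})
        = {Q. partition_on (insert x A) Q}"
  proof (intro equalityI subsetI)
    fix Q
    assume "Q \<in> (\<lambda>(C, P). insert (insert x C) P) ` (SIGMA C:Pow A. {P. partition_on (A - C) P})"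
    then obtain C P where C: "C \<subseteq> A" and P: "partition_on (A - C) P"
      and Q: "Q = insert (insert x C) P" by blast
    have "disjnt (insert x C) (\<Union>P)"
      using partition_onD1[OF P] assms C by (auto simp: disjnt_def)
    moreover have "insert x A - insert x C = A - C"
      using assms by blast
    ultimately show "Q \<in> {Q. partition_on (insert x A) Q}"
      using partition_on_insert[of "insert x C" P "insert x A"] P C Q by auto
  next
    fix Q assume "Q \<in> {Q. partition_on (insert x A) Q}"
    then have Q: "partition_on (insert x A) Q" by simp
    then obtain b where b: "b \<in> Q" "x \<in> b"
      using partition_onD1[OF Q] by blast
    have Q_eq: "Q = insert (insert x (b - {x})) (Q - {b})"
      using b by (simp add: insert_absorb)
    have "disjnt b q" if "q \<in> Q - {b}" for q
      using partition_onD2[OF Q] b that by (auto simp: disjoint_def disjnt_def)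
    then have "disjnt b (\<Union>(Q - {b}))"
      by (auto simp: disjnt_def)
    with Q b have "partition_on (insert x A - b) (Q - {b})" "b \<subseteq> insert x A"
      using partition_on_insert[of b "Q - {b}" "insert x A"] by (simp_all add: insert_absorb)
    moreover have "insert x A - b = A - (b - {x})"
      using assms b by blast
    ultimately
    show "Q \<in> (\<lambda>(C, P). insert (insert x C) P) ` (SIGMA C:Pow A. {P. partition_on (A - C) P})"
      using Q_eq assms by (intro image_eqI[of _ _ "(b - {x}, Q - {b})"]) auto
  qed
qed

lemma Bell_Suc: "Bell (Suc i) = (\<Sum>j\<le>i. (i choose j) * Bell j)"
proof -
  let ?A = "{1..i}"
  have "Bell (Suc i) = card {Q. partition_on (insert (Suc i) ?A) Q}"
    using card_partitions_eq_Bell[of "insert (Suc i) ?A"] by simp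
  also have "\<dots> = card (SIGMA C:Pow ?A. {P. partition_on (?A - C) P})"
    by (rule bij_betw_same_card[OF bij_betw_partitions_insert, symmetric]) simp
  also have "\<dots> = (\<Sum>C\<in>Pow ?A. Bell (i - card C))"
    by (subst card_SigmaI)
      (auto intro!: sum.cong finitely_many_partition_on
        simp: card_partitions_eq_Bell card_Diff_subset finite_subset)
  also have "\<dots> = (\<Sum>k\<le>i. (i choose k) * Bell (i - k))"
    using sum_Pow_card[of ?A "\<lambda>k. Bell (i - k)"] by simp
  also have "\<dots> = (\<Sum>j\<le>i. (i choose j) * Bell j)"
    by (rule sum.reindex_bij_witness[where i="\<lambda>k. i - k" and j="\<lambda>k. i - k"])
      (auto simp: binomial_symmetric[symmetric])
  finally show ?thesis .
qed

definition fixpoint_moment :: "nat \<Rightarrow> nat \<Rightarrow> nat" where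
  "fixpoint_moment i n = (\<Sum>k\<le>n. k ^ i * (n choose k) * derangements_count (n - k))"

lemma fixpoint_moment_Suc_Suc:
  "fixpoint_moment (Suc i) (Suc n) = Suc n * (\<Sum>j\<le>i. (i choose j) * fixpoint_moment j n)"
proof -
  have "fixpoint_moment (Suc i) (Suc n)
      = (\<Sum>k\<le>n. Suc k ^ Suc i * (Suc n choose Suc k) * derangements_count (n - k))"
    unfolding fixpoint_moment_def by (subst sum.atMost_Suc_shift) simp
  also have "\<dots> = (\<Sum>k\<le>n. Suc n * (Suc k ^ i * (n choose k) * derangements_count (n - k)))"
  proof (intro sum.cong refl)
    fix k
    have "Suc k ^ Suc i * (Suc n choose Suc k) = Suc k ^ i * (Suc k * (Suc n choose Suc k))"
      by (simp only: power_Suc mult_ac)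
    also have "\<dots> = Suc n * (Suc k ^ i * (n choose k))"
      by (simp only: Suc_times_binomial mult_ac)
    finally show "Suc k ^ Suc i * (Suc n choose Suc k) * derangements_count (n - k)
        = Suc n * (Suc k ^ i * (n choose k) * derangements_count (n - k))"
      by (simp only: mult.assoc)
  qed
  also have "\<dots> = Suc n *
      (\<Sum>k\<le>n. \<Sum>j\<le>i. (i choose j) * (k ^ j * (n choose k) * derangements_count (n - k)))"
  proof -
    have "Suc k ^ i = (\<Sum>j\<le>i. (i choose j) * k ^ j)" for k
      using binomial[of k 1 i] by (simp add: mult_ac)
    then show ?thesis
      by (simp add: sum_distrib_left sum_distrib_right mult.assoc)
  qed
  also have "\<dots> = Suc n * (\<Sum>j\<le>i. (i choose j) * fixpoint_moment j n)"
    by (subst sum.swap) (simp add: fixpoint_moment_def sum_distrib_left)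
  finally show ?thesis .
qed

lemma fixpoint_moment_eq_Bell:
  "i \<le> n \<Longrightarrow> fixpoint_moment i n = Bell i * fact n"
proof (induction i arbitrary: n rule: less_induct)
  case (less i)
  show ?case
  proof (cases i)
    case 0
    then show ?thesis
      by (simp add: fixpoint_moment_def Bell_def partition_on_empty sum_binomial_derangements_count)
  next
    case (Suc i')
    with less.prems obtain n' where n: "n = Suc n'"
      by (cases n) auto
    have "fixpoint_moment i n = Suc n' * (\<Sum>j\<le>i'. (i' choose j) * fixpoint_moment j n')"
      using Suc n fixpoint_moment_Suc_Suc by simp
    also have "\<dots> = Suc n' * (\<Sum>j\<le>i'. (i' choose j) * (Bell j * fact n'))"
      using less.IH less.prems Suc n by (intro arg_cong[where f="\<lambda>s. Suc n' * s"] sum.cong) auto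
    also have "\<dots> = (\<Sum>j\<le>i'. (i' choose j) * Bell j) * (Suc n' * fact n')"
      by (simp only: sum_distrib_left sum_distrib_right mult_ac)
    also have "\<dots> = Bell i * fact n"
      using Suc n Bell_Suc[of i'] fact_Suc[of n'] by simp
    finally show ?thesis .
  qed
qed

theorem theorem2:
  fixes n m :: nat and a :: "nat \<Rightarrow> int" and g :: "int \<Rightarrow> int"
  assumes "m \<le> n"
    and "\<And>x. g x = (\<Sum>i\<le>m. a i * x ^ i)"
  shows "(\<Sum>k\<le>n. g (int k) * int (n choose k) * int (derangements_count (n - k)))
         = (\<Sum>i\<le>m. a i * int (Bell i)) * int (fact n)"
proof -
  have "(\<Sum>k\<le>n. g (int k) * int (n choose k) * int (derangements_count (n - k)))
      = (\<Sum>k\<le>n. \<Sum>i\<le>m. a i * int (k ^ i * (n choose k) * derangements_count (n - k)))"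
    by (intro sum.cong refl) (simp add: assms(2) sum_distrib_left sum_distrib_right mult_ac)
  also have "\<dots> = (\<Sum>i\<le>m. a i * int (fixpoint_moment i n))"
    by (subst sum.swap) (simp add: fixpoint_moment_def sum_distrib_left of_nat_sum)
  also have "\<dots> = (\<Sum>i\<le>m. a i * int (Bell i)) * int (fact n)"
    using assms(1) by (simp add: fixpoint_moment_eq_Bell sum_distrib_right mult.assoc)
  finally show ?thesis .
qed

end
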